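(* For every $v\geq 8$ there exists a connected symmetric configuration $v_3$ with strong chromatic number exactly 4.
   Context: A symmetric configuration $v_3$ consists of a set of $v$ points and a collection of $v$ blocks, each block being a 3-element subset of the points, such that every point lies in exactly 3 blocks and any two distinct points lie in at most one common block; it is connected if it is not the union of two configurations on disjoint nonempty point sets. A strong colouring is an assignment of colours to points such that the three points of every block receive three distinct colours; the strong chromatic number is the minimum number of colours in a strong colouring (equivalently, the chromatic number of the graph on the points in which two points are adjacent iff they share a block). *)

theory Defs
  imports Main
begin

definition sym_config :: "'a set \<Rightarrow> 'a set set \<Rightarrow> nat \<Rightarrow> bool" where
  "sym_config P B v \<longleftrightarrow>
     finite P \<and> card P = v \<and> finite B \<and> card B = v \<and>
     (\<forall>b\<in>B. b \<subseteq> P \<and> card b = 3) \<and>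
     (\<forall>p\<in>P. card {b\<in>B. p \<in> b} = 3) \<and>
     (\<forall>p\<in>P. \<forall>q\<in>P. p \<noteq> q \<longrightarrow> card {b\<in>B. p \<in> b \<and> q \<in> b} \<le> 1)"

definition config_connected :: "'a set \<Rightarrow> 'a set set \<Rightarrow> bool" where
  "config_connected P B \<longleftrightarrow>
     \<not> (\<exists>P1 P2. P1 \<noteq> {} \<and> P2 \<noteq> {} \<and> P1 \<inter> P2 = {} \<and> P1 \<union> P2 = P \<and>
               (\<forall>b\<in>B. b \<subseteq> P1 \<or> b \<subseteq> P2))"

definition strong_colouring :: "'a set \<Rightarrow> 'a set set \<Rightarrow> ('a \<Rightarrow> nat) \<Rightarrow> nat \<Rightarrow> bool" where
  "strong_colouring P B c k \<longleftrightarrow>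
     (\<forall>p\<in>P. c p < k) \<and> (\<forall>b\<in>B. inj_on c b)"

definition strong_chromatic_number :: "'a set \<Rightarrow> 'a set set \<Rightarrow> nat" where
  "strong_chromatic_number P B = (LEAST k. \<exists>c. strong_colouring P B c k)"

end

theory Submission
  imports Defs
begin

text \<open>The translates \<open>{i, i+1, i+3}\<close> of the difference set \<open>{0, 1, 3}\<close> form a linear
path of blocks along which a strong 4-colouring is forced to be periodic modulo 4. Five blocks on
the last five points and the points \<open>0, 1, 2\<close> close the path into a connected \<open>v\<^sub>3\<close>
configuration; they are chosen, according to \<open>v mod 4\<close>, so that the periodic colouring
extends, while the last four points are pairwise collinear and force four colours. Regularity
follows by double counting once every point is seen on three blocks.\<close>

lemma card_incident_blocks_eq_3:
  assumes "finite P" "finite I" "card I = card P"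
    and blocks: "\<And>i. i \<in> I \<Longrightarrow> blk i \<subseteq> P \<and> card (blk i) = 3"
    and degree: "\<And>p. p \<in> P \<Longrightarrow> 3 \<le> card {i\<in>I. p \<in> blk i}"
    and "p \<in> P"
  shows "card {i\<in>I. p \<in> blk i} = 3"
proof -
  have "(\<Sum>q\<in>P. card {i\<in>I. q \<in> blk i}) = 3 * card I"
  proof (rule sum_multicount[OF \<open>finite P\<close> \<open>finite I\<close>], intro ballI)
    fix i assume "i \<in> I"
    then have "{q\<in>P. q \<in> blk i} = blk i" using blocks by auto
    then show "card {q\<in>P. q \<in> blk i} = 3" using blocks \<open>i \<in> I\<close> by simp
  qed
  also have "\<dots> = (\<Sum>q\<in>P. 3)" using \<open>card I = card P\<close> by simp
  finally have "(\<Sum>q\<in>P. 3) = (\<Sum>q\<in>P. card {i\<in>I. q \<in> blk i})" ..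
  from sum_mono_inv[OF this degree \<open>p \<in> P\<close> \<open>finite P\<close>] show ?thesis by simp
qed

lemma sym_config_indexed:
  assumes "finite P" "card P = v" "finite I" "card I = v"
    and blocks: "\<And>i. i \<in> I \<Longrightarrow> blk i \<subseteq> P \<and> card (blk i) = 3"
    and linear: "\<And>i j. i \<in> I \<Longrightarrow> j \<in> I \<Longrightarrow> i \<noteq> j \<Longrightarrow> card (blk i \<inter> blk j) \<le> 1"
    and degree: "\<And>p. p \<in> P \<Longrightarrow> 3 \<le> card {i\<in>I. p \<in> blk i}"
  shows "sym_config P (blk ` I) v"
proof -
  have finite_blk: "finite (blk i)" if "i \<in> I" for i
    using blocks[OF that] \<open>finite P\<close> finite_subset by blast
  have eq_if_two_common: "i = j"
    if "i \<in> I" "j \<in> I" "p \<in> blk i" "q \<in> blk i" "p \<in> blk j" "q \<in> blk j" "p \<noteq> q" for i j p q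
  proof (rule ccontr)
    assume "i \<noteq> j"
    then have "card (blk i \<inter> blk j) \<le> Suc 0" using linear that by simp
    then show False using that finite_blk by (simp add: card_le_Suc0_iff_eq)
  qed
  have inj: "inj_on blk I"
  proof (rule inj_onI)
    fix i j assume "i \<in> I" "j \<in> I" "blk i = blk j"
    moreover obtain p q r where "blk i = {p, q, r}" "p \<noteq> q"
      using blocks[OF \<open>i \<in> I\<close>] card_3_iff by metis
    ultimately show "i = j" using eq_if_two_common[of i j p q] by auto
  qed
  have degree_eq: "card {b\<in>blk ` I. p \<in> b} = card {i\<in>I. p \<in> blk i}" for p
  proof -
    have "{b\<in>blk ` I. p \<in> b} = blk ` {i\<in>I. p \<in> blk i}" by auto
    then show ?thesis by (simp add: card_image inj_on_subset[OF inj])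
  qed
  have pair: "card {b\<in>blk ` I. p \<in> b \<and> q \<in> b} \<le> 1" if "p \<noteq> q" for p q
  proof -
    have "b = b'" if "b \<in> {b\<in>blk ` I. p \<in> b \<and> q \<in> b}" "b' \<in> {b\<in>blk ` I. p \<in> b \<and> q \<in> b}"
      for b b'
      using that eq_if_two_common[OF _ _ _ _ _ _ \<open>p \<noteq> q\<close>] by blast
    then show ?thesis using \<open>finite I\<close> by (simp add: card_le_Suc0_iff_eq)
  qed
  show ?thesis
    unfolding sym_config_def
  proof (intro conjI ballI impI)
    show "card (blk ` I) = v" using card_image[OF inj] \<open>card I = v\<close> by simp
    show "card {b\<in>blk ` I. p \<in> b} = 3" if "p \<in> P" for p
      using card_incident_blocks_eq_3[of P I blk p] assms that degree_eq by simp
  qed (use assms pair in auto)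
qed

lemma config_connected_if_linked_downwards:
  fixes P :: "nat set"
  assumes "0 \<in> P"
    and linked: "\<And>p. p \<in> P \<Longrightarrow> 0 < p \<Longrightarrow> \<exists>b\<in>B. \<exists>q<p. q \<in> b \<and> p \<in> b"
  shows "config_connected P B"
  unfolding config_connected_def
proof
  assume "\<exists>P1 P2. P1 \<noteq> {} \<and> P2 \<noteq> {} \<and> P1 \<inter> P2 = {} \<and> P1 \<union> P2 = P \<and>
                 (\<forall>b\<in>B. b \<subseteq> P1 \<or> b \<subseteq> P2)"
  then obtain P1 P2 where nonempty: "P1 \<noteq> {}" "P2 \<noteq> {}" and disjoint: "P1 \<inter> P2 = {}"
    and cover: "P1 \<union> P2 = P" and split: "\<forall>b\<in>B. b \<subseteq> P1 \<or> b \<subseteq> P2"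
    by blast
  have same_part: "p \<in> P1 \<longleftrightarrow> 0 \<in> P1" if "p \<in> P" for p
    using that
  proof (induction p rule: less_induct)
    case (less p)
    show ?case
    proof (cases "p = 0")
      case False
      then obtain b q where "b \<in> B" "q < p" "q \<in> b" "p \<in> b"
        using linked less.prems by blast
      then have "q \<in> P" "q \<in> P1 \<longleftrightarrow> p \<in> P1"
        using split cover disjoint by blast+
      then show ?thesis using less.IH[OF \<open>q < p\<close>] by blast
    qed simp
  qed
  show False
    using nonempty disjoint cover same_part \<open>0 \<in> P\<close> by blast
qed

lemma card_le_colours_of_clique:
  assumes colouring: "strong_colouring P B c k" and "K \<subseteq> P"
    and clique: "\<And>x y. x \<in> K \<Longrightarrow> y \<in> K \<Longrightarrow> x \<noteq> y \<Longrightarrow> \<exists>b\<in>B. x \<in> b \<and> y \<in> b"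
  shows "card K \<le> k"
proof -
  have "inj_on c K"
  proof (rule inj_onI, rule ccontr)
    fix x y assume "x \<in> K" "y \<in> K" "c x = c y" "x \<noteq> y"
    then obtain b where "b \<in> B" "x \<in> b" "y \<in> b" using clique by blast
    then show False
      using colouring \<open>c x = c y\<close> \<open>x \<noteq> y\<close> unfolding strong_colouring_def by (meson inj_onD)
  qed
  moreover have "c ` K \<subseteq> {..<k}"
    using colouring \<open>K \<subseteq> P\<close> unfolding strong_colouring_def by auto
  ultimately show ?thesis using card_inj_on_le[of c K "{..<k}"] by simp
qed

lemma strong_chromatic_number_eqI:
  assumes "strong_colouring P B c k" "K \<subseteq> P" "card K = k"
    and "\<And>x y. x \<in> K \<Longrightarrow> y \<in> K \<Longrightarrow> x \<noteq> y \<Longrightarrow> \<exists>b\<in>B. x \<in> b \<and> y \<in> b"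
  shows "strong_chromatic_number P B = k"
  unfolding strong_chromatic_number_def
  using assms card_le_colours_of_clique[of P B _ _ K] by (intro Least_equality) auto

definition config_block :: "bool \<Rightarrow> nat \<Rightarrow> nat \<Rightarrow> nat set" where
  "config_block s m i =
    (if i < m+3 then {i, i+1, i+3}
     else if i = m+3 then {m+3, m+6, if s then m+7 else 0}
     else if i = m+4 then {m+4, m+5, m+6}
     else if i = m+5 then {m+4, m+7, 0}
     else if i = m+6 then {m+5, m+7, 1}
     else {m+6, 2, if s then 0 else m+7})"

lemma config_block_path: "i < m+3 \<Longrightarrow> config_block s m i = {i, i+1, i+3}"
  by (simp add: config_block_def)

lemma finite_config_block [simp]: "finite (config_block s m i)"
  by (simp add: config_block_def)

lemma config_block_subset_card:
  "i < m+8 \<Longrightarrow> config_block s m i \<subseteq> {..<m+8} \<and> card (config_block s m i) = 3"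
  by (auto simp: config_block_def)

lemma card_translates_013_inter_le: "i \<noteq> j \<Longrightarrow> card ({i, i+1, i+3} \<inter> {j, j+1, j+3::nat}) \<le> 1"
  by (auto simp: card_le_Suc0_iff_eq)

lemma config_block_closing_linear:
  "\<forall>i\<in>{m+3, m+4, m+5, m+6, m+7}. \<forall>j\<in>{m+3, m+4, m+5, m+6, m+7}. i \<noteq> j \<longrightarrow>
     card (config_block s m i \<inter> config_block s m j) \<le> 1"
  by (cases s) (simp_all add: config_block_def)

lemma config_block_closing_pairs_off_path:
  assumes "s \<or> 0 < m"
  shows "\<forall>j\<in>{m+3, m+4, m+5, m+6, m+7}. \<forall>x\<in>config_block s m j. \<forall>y\<in>config_block s m j.
           x \<noteq> y \<longrightarrow> \<not> (\<exists>i<m+3. x \<in> {i, i+1, i+3} \<and> y \<in> {i, i+1, i+3})"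
  using assms by (cases s) (auto simp: config_block_def)

lemma config_block_linear:
  assumes "s \<or> 0 < m" "i < m+8" "j < m+8" "i \<noteq> j"
  shows "card (config_block s m i \<inter> config_block s m j) \<le> 1"
proof -
  have closing: "k \<in> {m+3, m+4, m+5, m+6, m+7}" if "k < m+8" "\<not> k < m+3" for k
    using that by auto
  have path_closing: "card (config_block s m i \<inter> config_block s m j) \<le> 1"
    if "i < m+3" "j < m+8" "\<not> j < m+3" for i j
  proof -
    have "x = y" if "x \<in> config_block s m i \<inter> config_block s m j"
      "y \<in> config_block s m i \<inter> config_block s m j" for x y
      using that config_block_closing_pairs_off_path[OF assms(1)] closing[of j]
        \<open>i < m+3\<close> \<open>j < m+8\<close> \<open>\<not> j < m+3\<close> config_block_path[of i m s]
      by blast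
    then show ?thesis by (simp add: card_le_Suc0_iff_eq)
  qed
  show ?thesis
  proof (cases "i < m+3"; cases "j < m+3")
    assume "i < m+3" "j < m+3"
    then show ?thesis using card_translates_013_inter_le \<open>i \<noteq> j\<close> by (simp add: config_block_path)
  next
    assume "\<not> i < m+3" "\<not> j < m+3"
    then show ?thesis using config_block_closing_linear closing assms(2-4) by blast
  qed (use path_closing[of i j] path_closing[of j i] assms(2,3) in \<open>simp_all add: Int_commute\<close>)
qed

lemma config_block_degree:
  assumes "p < m+8"
  shows "3 \<le> card {i\<in>{..<m+8}. p \<in> config_block s m i}"
proof -
  have three: "3 \<le> card {i\<in>{..<m+8}. p \<in> config_block s m i}"
    if "{a, b, c} \<subseteq> {i\<in>{..<m+8}. p \<in> config_block s m i}" "card {a, b, c} = 3" for a b c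
    using card_mono[OF _ that(1)] that(2) by simp
  consider "3 \<le> p" "p \<le> m+2" | "p = 0" | "p = 1" | "p = 2" | "p = m+3" | "p = m+4" | "p = m+5"
    | "p = m+6" | "p = m+7"
    using assms by linarith
  then show ?thesis
  proof cases
    case 1
    show ?thesis by (rule three[of "p-3" "p-1" p]) (use 1 in \<open>auto simp: config_block_def card_insert_if\<close>)
  next
    case 2
    show ?thesis by (rule three[of 0 "m+5" "if s then m+7 else m+3"]) (auto simp: 2 config_block_def)
  next
    case 3
    show ?thesis by (rule three[of 0 1 "m+6"]) (auto simp: 3 config_block_def)
  next
    case 4
    show ?thesis by (rule three[of 1 2 "m+7"]) (auto simp: 4 config_block_def)
  next
    case 5
    show ?thesis by (rule three[of m "m+2" "m+3"]) (auto simp: 5 config_block_def)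
  next
    case 6
    show ?thesis by (rule three[of "m+1" "m+4" "m+5"]) (auto simp: 6 config_block_def)
  next
    case 7
    show ?thesis by (rule three[of "m+2" "m+4" "m+6"]) (auto simp: 7 config_block_def)
  next
    case 8
    show ?thesis by (rule three[of "m+3" "m+4" "m+7"]) (auto simp: 8 config_block_def)
  next
    case 9
    show ?thesis by (rule three[of "m+5" "m+6" "if s then m+3 else m+7"]) (auto simp: 9 config_block_def)
  qed
qed

lemma config_block_linked_downwards:
  assumes "0 < p" "p < m+8"
  shows "\<exists>b\<in>config_block s m ` {..<m+8}. \<exists>q<p. q \<in> b \<and> p \<in> b"
proof -
  have link: "\<exists>b\<in>config_block s m ` {..<m+8}. \<exists>q<p. q \<in> b \<and> p \<in> b"
    if "i < m+8" "q < p" "q \<in> config_block s m i" "p \<in> config_block s m i" for i q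
    using that by blast
  consider "p \<le> m+3" | "p = m+4 \<or> p = m+5" | "p = m+6" | "p = m+7"
    using assms by linarith
  then show ?thesis
  proof cases
    case 1
    show ?thesis by (rule link[of "p-1" "p-1"]) (use 1 assms in \<open>auto simp: config_block_def\<close>)
  next
    case 2
    show ?thesis by (rule link[of "p-3" "p-3"]) (use 2 in \<open>auto simp: config_block_def\<close>)
  next
    case 3
    show ?thesis by (rule link[of "m+4" "m+4"]) (auto simp: 3 config_block_def)
  next
    case 4
    show ?thesis by (rule link[of "m+5" "m+4"]) (auto simp: 4 config_block_def)
  qed
qed

lemma config_block_clique:
  assumes "x \<in> {m+4, m+5, m+6, m+7}" "y \<in> {m+4, m+5, m+6, m+7}" "x \<noteq> y"
  shows "\<exists>b\<in>config_block s m ` {..<m+8}. x \<in> b \<and> y \<in> b"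
proof -
  have "\<exists>i\<in>{m+3, m+4, m+5, m+6, m+7}. x \<in> config_block s m i \<and> y \<in> config_block s m i"
    using assms by (cases s) (auto simp: config_block_def)
  then show ?thesis by auto
qed

lemma config_block_sym_config_connected:
  assumes "s \<or> 0 < m"
  shows "sym_config {..<m+8} (config_block s m ` {..<m+8}) (m+8)
    \<and> config_connected {..<m+8} (config_block s m ` {..<m+8})"
proof
  show "sym_config {..<m+8} (config_block s m ` {..<m+8}) (m+8)"
    by (rule sym_config_indexed)
      (use config_block_subset_card config_block_linear[OF assms] config_block_degree in auto)
  show "config_connected {..<m+8} (config_block s m ` {..<m+8})"
    by (rule config_connected_if_linked_downwards) (use config_block_linked_downwards in auto)
qed

text \<open>On the points \<open>1 .. m+3\<close> every strong 4-colouring is periodic, so a colouring is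
determined by the colours of the remaining points \<open>0\<close> and \<open>m+4 .. m+7\<close>.\<close>

definition periodic_colouring :: "nat \<Rightarrow> nat \<Rightarrow> nat \<Rightarrow> nat \<Rightarrow> nat \<Rightarrow> nat \<Rightarrow> nat \<Rightarrow> nat" where
  "periodic_colouring m c0 c4 c5 c6 c7 p =
    (if p = 0 then c0 else if p = m+4 then c4 else if p = m+5 then c5
     else if p = m+6 then c6 else if p = m+7 then c7 else p mod 4)"

lemma inj_on_mod4_translate_013: "inj_on (\<lambda>p. p mod 4) {i, i+1, i+3::nat}"
proof -
  have "i mod 4 \<noteq> (i+1) mod 4" "i mod 4 \<noteq> (i+3) mod 4" "(i+1) mod 4 \<noteq> (i+3) mod 4"
    by presburger+
  then show ?thesis by simp
qed

lemma strong_colouring_periodic_colouring: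
  assumes "c0 < 4" "c4 < 4" "c5 < 4" "c6 < 4" "c7 < 4"
    and boundary: "\<forall>i\<in>{0, m+1, m+2, m+3, m+4, m+5, m+6, m+7}.
      inj_on (periodic_colouring m c0 c4 c5 c6 c7) (config_block s m i)"
  shows "strong_colouring {..<m+8} (config_block s m ` {..<m+8})
    (periodic_colouring m c0 c4 c5 c6 c7) 4"
proof -
  let ?c = "periodic_colouring m c0 c4 c5 c6 c7"
  have "inj_on ?c (config_block s m i)" if "i < m+8" for i
  proof (cases "i \<in> {0, m+1, m+2, m+3, m+4, m+5, m+6, m+7}")
    case False
    then have "0 < i" "i \<le> m" using that by auto
    then have "?c p = p mod 4" if "p \<in> {i, i+1, i+3}" for p
      using that by (auto simp: periodic_colouring_def)
    then have "inj_on ?c {i, i+1, i+3} = inj_on (\<lambda>p. p mod 4) {i, i+1, i+3}"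
      by (rule inj_on_cong)
    then show ?thesis using \<open>i \<le> m\<close> inj_on_mod4_translate_013 by (simp add: config_block_path)
  next
    case True
    then show ?thesis using boundary by blast
  qed
  moreover have "?c p < 4" for p
    using assms(1-5) by (simp add: periodic_colouring_def)
  ultimately show ?thesis unfolding strong_colouring_def by blast
qed

text \<open>Neither closure suits every residue: the one with \<open>s\<close> set is 4-colourable for
\<open>m mod 4 \<in> {0, 3}\<close>, the other for \<open>m mod 4 \<in> {1, 2, 3}\<close>, where it is also linear as
\<open>m > 0\<close>.\<close>

lemma config_block_strong_4_colouring:
  "\<exists>s c. (s \<or> 0 < m) \<and> strong_colouring {..<m+8} (config_block s m ` {..<m+8}) c 4"
proof -
  obtain t where "m = 4*t \<or> m = 4*t+1 \<or> m = 4*t+2 \<or> m = 4*t+3"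
  proof
    show "m = 4*(m div 4) \<or> m = 4*(m div 4)+1 \<or> m = 4*(m div 4)+2 \<or> m = 4*(m div 4)+3"
      by linarith
  qed
  then consider "m = 4*t" | "m = 4*t+1" | "m = 4*t+2" | "m = 4*t+3" by blast
  then show ?thesis
  proof cases
    case 1
    have "strong_colouring {..<m+8} (config_block True m ` {..<m+8}) (periodic_colouring m 0 3 0 1 2) 4"
      by (rule strong_colouring_periodic_colouring)
        (simp_all add: 1 config_block_def periodic_colouring_def mod_Suc)
    then show ?thesis by blast
  next
    case 2
    have "strong_colouring {..<m+8} (config_block False m ` {..<m+8}) (periodic_colouring m 2 1 2 3 0) 4"
      by (rule strong_colouring_periodic_colouring)
        (simp_all add: 2 config_block_def periodic_colouring_def mod_Suc)
    moreover have "0 < m" using 2 by simp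
    ultimately show ?thesis by blast
  next
    case 3
    have "strong_colouring {..<m+8} (config_block False m ` {..<m+8}) (periodic_colouring m 2 1 2 3 0) 4"
      by (rule strong_colouring_periodic_colouring)
        (simp_all add: 3 config_block_def periodic_colouring_def mod_Suc)
    moreover have "0 < m" using 3 by simp
    ultimately show ?thesis by blast
  next
    case 4
    have "strong_colouring {..<m+8} (config_block False m ` {..<m+8}) (periodic_colouring m 0 2 0 1 3) 4"
      by (rule strong_colouring_periodic_colouring)
        (simp_all add: 4 config_block_def periodic_colouring_def mod_Suc)
    moreover have "0 < m" using 4 by simp
    ultimately show ?thesis by blast
  qed
qed

theorem mainTheorem14:
  fixes v :: nat
  assumes "v \<ge> 8"
  shows "\<exists>(P :: nat set) (B :: nat set set).
           sym_config P B v \<and> config_connected P B \<and> strong_chromatic_number P B = 4"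
proof -
  define m where "m = v - 8"
  have v: "v = m+8" using assms by (simp add: m_def)
  obtain s c where "s \<or> 0 < m"
    and colouring: "strong_colouring {..<m+8} (config_block s m ` {..<m+8}) c 4"
    using config_block_strong_4_colouring by blast
  have clique: "{m+4, m+5, m+6, m+7} \<subseteq> {..<m+8}" "card {m+4, m+5, m+6, m+7} = 4"
    by auto
  have "strong_chromatic_number {..<m+8} (config_block s m ` {..<m+8}) = 4"
    using strong_chromatic_number_eqI[OF colouring clique config_block_clique] .
  then show ?thesis
    using config_block_sym_config_connected[OF \<open>s \<or> 0 < m\<close>] unfolding v by blast
qed

end
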